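(* Let $n \ge 1$. Let $H_n$ be the hypergraph whose vertex set consists of the $8n$ variable indices $(k,i)$ with $k \in \{1,\dots,n\}$ and $i \in \{1,2,3,4,5,6,A,B\}$, and whose hyperedges (scopes) are: (i) the singletons $\{(k,i)\}$ for all vertices; (ii) for each $k \in \{1,\dots,n\}$, the pairs $\{(k,1),(k,2)\}$, $\{(k,2),(k,3)\}$, $\{(k,3),(k,6)\}$, $\{(k,1),(k,4)\}$, $\{(k,4),(k,5)\}$, $\{(k,5),(k,6)\}$, $\{(k,A),(k,B)\}$, $\{(k,1),(k,B)\}$, $\{(k,2),(k,B)\}$, $\{(k,4),(k,A)\}$, $\{(k,4),(k,B)\}$, and the triples $\{(k,2),(k,A),(k,B)\}$, $\{(k,4),(k,A),(k,B)\}$; (iii) the pairs $\{(k,6),(k-1,1)\}$ for $2 \le k \le n$ and $\{(k,B),(k+1,A)\}$ for $1 \le k \le n-1$; (iv) the pair $\{(1,6),(1,A)\}$. Then the pathwidth of $H_n$ is exactly $3$.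
   Context: A path decomposition of a hypergraph $(V,\mathcal{S})$ is a sequence of subsets (bins) $X_1,\dots,X_p \subseteq V$ such that: every vertex lies in some bin; for every hyperedge $S \in \mathcal{S}$ there is $r$ with $S \subseteq X_r$; and if $v \in X_r \cap X_s$ then $v \in X_\ell$ for all $r \le \ell \le s$. Its width is $\max_r |X_r| - 1$, and the pathwidth of $(V,\mathcal{S})$ is the minimum width over all path decompositions. This hypergraph is the constraint hypergraph of the paper's "controlled doubling construction" with $n$ gadgets. *)

theory Defs
  imports Main
begin

definition is_path_decomposition :: "'a set \<Rightarrow> 'a set set \<Rightarrow> 'a set list \<Rightarrow> bool" where
  "is_path_decomposition V S Xs \<longleftrightarrow>
     Xs \<noteq> [] \<and>
     (\<forall>r < length Xs. Xs ! r \<subseteq> V) \<and>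
     (\<forall>v \<in> V. \<exists>r < length Xs. v \<in> Xs ! r) \<and>
     (\<forall>e \<in> S. \<exists>r < length Xs. e \<subseteq> Xs ! r) \<and>
     (\<forall>v r s l. r \<le> l \<and> l \<le> s \<and> s < length Xs \<and> v \<in> Xs ! r \<and> v \<in> Xs ! s
        \<longrightarrow> v \<in> Xs ! l)"

definition pd_width :: "'a set list \<Rightarrow> nat" where
  "pd_width Xs = Max (card ` set Xs) - 1"

definition pathwidth :: "'a set \<Rightarrow> 'a set set \<Rightarrow> nat" where
  "pathwidth V S = (LEAST w. \<exists>Xs. is_path_decomposition V S Xs \<and> pd_width Xs = w)"

datatype idx = I1 | I2 | I3 | I4 | I5 | I6 | IA | IB

definition Hn_V :: "nat \<Rightarrow> (nat \<times> idx) set" where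
  "Hn_V n = {1..n} \<times> UNIV"

definition gadget_edges :: "nat \<Rightarrow> (nat \<times> idx) set set" where
  "gadget_edges k =
    {{(k,I1),(k,I2)}, {(k,I2),(k,I3)}, {(k,I3),(k,I6)}, {(k,I1),(k,I4)},
     {(k,I4),(k,I5)}, {(k,I5),(k,I6)}, {(k,IA),(k,IB)}, {(k,I1),(k,IB)},
     {(k,I2),(k,IB)}, {(k,I4),(k,IA)}, {(k,I4),(k,IB)},
     {(k,I2),(k,IA),(k,IB)}, {(k,I4),(k,IA),(k,IB)}}"

definition Hn_S :: "nat \<Rightarrow> (nat \<times> idx) set set" where
  "Hn_S n =
     {{v} | v. v \<in> Hn_V n}
     \<union> (\<Union>k\<in>{1..n}. gadget_edges k)
     \<union> {{(k,I6),(k-1,I1)} | k. 2 \<le> k \<and> k \<le> n}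
     \<union> {{(k,IB),(k+1,IA)} | k. 1 \<le> k \<and> k \<le> n - 1}
     \<union> {{(1,I6),(1,IA)}}"

end

theory Submission
  imports Defs
begin

(* Upper bound: every vertex occupies an interval [first_bin, last_bin] of bins; after the bin
   {(1,6),(1,A)}, gadget k fills six consecutive bins of four vertices, the last of which also
   holds (k+1,6) and (k+1,A).  Lower bound: gadget 1 together with the edge {(1,6),(1,A)}
   alone admits no decomposition with bins of size at most 3.  The bins p containing {2,A,B}
   and q containing {4,A,B} differ, say p < q.  Vertex 4 lives strictly right of p, so the
   triangle 1,4,B meets strictly right of q; this pushes the bins of the edges {6,A}, {5,6}
   and {4,5} one after the other to the left of q, and the bin of {4,5} ends up strictly
   between p and q, where it also contains A and B. *)

lemma is_path_decompositionD:
  assumes "is_path_decomposition V S Xs"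
  shows "\<And>r. r < length Xs \<Longrightarrow> Xs ! r \<subseteq> V"
    and "\<And>e. e \<in> S \<Longrightarrow> \<exists>r < length Xs. e \<subseteq> Xs ! r"
    and "\<And>v r l s. r \<le> l \<Longrightarrow> l \<le> s \<Longrightarrow> s < length Xs \<Longrightarrow> v \<in> Xs ! r \<Longrightarrow> v \<in> Xs ! s
      \<Longrightarrow> v \<in> Xs ! l"
  using assms unfolding is_path_decomposition_def by meson+

lemma card_le_pd_width:
  assumes "is_path_decomposition V S Xs" and "finite V" and "r < length Xs" and "F \<subseteq> Xs ! r"
  shows "card F \<le> pd_width Xs + 1"
proof -
  have "card F \<le> card (Xs ! r)"
    using assms is_path_decompositionD(1)[OF assms(1,3)] by (intro card_mono) (auto intro: finite_subset)
  also have "\<dots> \<le> Max (card ` set Xs)"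
    using assms(3) by (intro Max_ge) auto
  also have "\<dots> \<le> pd_width Xs + 1"
    by (simp add: pd_width_def)
  finally show ?thesis .
qed

lemma pd_width_le:
  assumes "Xs \<noteq> []" and "\<And>X. X \<in> set Xs \<Longrightarrow> card X \<le> w + 1"
  shows "pd_width Xs \<le> w"
proof -
  have "Max (card ` set Xs) \<le> w + 1"
    using assms by (simp add: Max_le_iff)
  then show ?thesis
    by (simp add: pd_width_def)
qed

lemma is_path_decomposition_map:
  fixes B :: "nat \<Rightarrow> 'a set"
  assumes "0 < m"
    and convex: "\<And>v x y z. v \<in> B x \<Longrightarrow> v \<in> B z \<Longrightarrow> x \<le> y \<Longrightarrow> y \<le> z \<Longrightarrow> v \<in> B y"
    and bins: "\<And>r. r < m \<Longrightarrow> B r \<subseteq> V"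
    and vertices: "\<And>v. v \<in> V \<Longrightarrow> \<exists>r<m. v \<in> B r"
    and edges: "\<And>e. e \<in> S \<Longrightarrow> \<exists>r<m. e \<subseteq> B r"
  shows "is_path_decomposition V S (map B [0..<m])"
proof -
  let ?Xs = "map B [0..<m]"
  have nth: "?Xs ! r = B r" if "r < m" for r
    using that by simp
  show ?thesis
    unfolding is_path_decomposition_def
  proof (intro conjI allI ballI impI)
    show "?Xs \<noteq> []"
      using \<open>0 < m\<close> by simp
    show "?Xs ! r \<subseteq> V" if "r < length ?Xs" for r
      using that nth bins by simp
    show "\<exists>r < length ?Xs. v \<in> ?Xs ! r" if "v \<in> V" for v
      using vertices[OF that] nth by auto
    show "\<exists>r < length ?Xs. e \<subseteq> ?Xs ! r" if "e \<in> S" for e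
      using edges[OF that] nth by (metis diff_zero length_map length_upt)
    show "v \<in> ?Xs ! l" if "r \<le> l \<and> l \<le> s \<and> s < length ?Xs \<and> v \<in> ?Xs ! r \<and> v \<in> ?Xs ! s"
      for v r s l
      using that nth convex[of v r s l] by auto
  qed
qed

lemma pathwidth_eqI:
  assumes "is_path_decomposition V S Xs" and "pd_width Xs = w"
    and "\<And>Ys. is_path_decomposition V S Ys \<Longrightarrow> w \<le> pd_width Ys"
  shows "pathwidth V S = w"
  unfolding pathwidth_def using assms by (intro Least_equality) auto

(* Stated in the class context so that the case q < p follows from the dual order. *)
context linorder
begin

lemma three_intervals_common_point:
  fixes mem :: "'v \<Rightarrow> 'a \<Rightarrow> bool"
  assumes convex: "\<And>v x y z. mem v x \<Longrightarrow> mem v z \<Longrightarrow> x \<le> y \<Longrightarrow> y \<le> z \<Longrightarrow> mem v y"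
    and ab: "mem a x" "mem b x" and ac: "mem a y" "mem c y" and bc: "mem b z" "mem c z"
  shows "\<exists>t. mem a t \<and> mem b t \<and> mem c t"
proof -
  have between: "mem v t" if "mem v x'" "mem v z'" "min x' z' \<le> t" "t \<le> max x' z'" for v x' z' t
    using convex[OF that(1,2)] convex[OF that(2,1)] that(3,4) by (cases "x' \<le> z'") auto
  \<comment> \<open>the median of x, y, z, which lies between any two of them\<close>
  define t where "t = max (min x y) (min (max x y) z)"
  have "mem a t" by (rule between[OF ab(1) ac(1)]) (auto simp: t_def min_def max_def)
  moreover have "mem b t" by (rule between[OF ab(2) bc(1)]) (auto simp: t_def min_def max_def)
  moreover have "mem c t" by (rule between[OF ac(2) bc(2)]) (auto simp: t_def min_def max_def)
  ultimately show ?thesis by blast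
qed

lemma gadget_forces_four_in_a_bin_ordered:
  fixes mem :: "'v \<Rightarrow> 'a \<Rightarrow> bool"
  assumes convex: "\<And>v x y z. mem v x \<Longrightarrow> mem v z \<Longrightarrow> x \<le> y \<Longrightarrow> y \<le> z \<Longrightarrow> mem v y"
    and at_most_three: "\<And>a b c d x. distinct [a, b, c, d] \<Longrightarrow>
      mem a x \<Longrightarrow> mem b x \<Longrightarrow> mem c x \<Longrightarrow> mem d x \<Longrightarrow> False"
    and distinct: "distinct [v1, v2, v4, v5, v6, vA, vB]"
    and covered: "\<And>e. e \<in> {{v2, vA, vB}, {v4, vA, vB}, {v1, v4}, {v1, vB}, {v4, vB}, {v5, v6},
      {v4, v5}, {v6, vA}} \<Longrightarrow> \<exists>x. \<forall>v\<in>e. mem v x"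
    and p: "mem v2 p" "mem vA p" "mem vB p"
    and q: "mem v4 q" "mem vA q" "mem vB q"
    and "p < q"
  shows False
proof -
  obtain x14 x1B x4B x56 x45 x6A where
    e14: "mem v1 x14" "mem v4 x14" and e1B: "mem v1 x1B" "mem vB x1B" and
    e4B: "mem v4 x4B" "mem vB x4B" and e56: "mem v5 x56" "mem v6 x56" and
    e45: "mem v4 x45" "mem v5 x45" and e6A: "mem v6 x6A" "mem vA x6A"
    using covered[of "{v1, v4}"] covered[of "{v1, vB}"] covered[of "{v4, vB}"]
      covered[of "{v5, v6}"] covered[of "{v4, v5}"] covered[of "{v6, vA}"]
    by simp blast
  have clash: False if "w \<in> {v1, v2, v5, v6}" "mem w x" "mem v4 x" "mem vA x" "mem vB x" for w x
    using at_most_three[of w v4 vA vB x] that distinct by auto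
  obtain t where t: "mem v1 t" "mem v4 t" "mem vB t"
    using three_intervals_common_point[where mem = mem, OF _ e14 e1B e4B] convex by blast
  have four_after_p: "p < x" if "mem v4 x" for x
  proof (rule ccontr)
    assume "\<not> p < x"
    then have "mem v4 p" using convex[OF that q(1)] \<open>p < q\<close> by simp
    then show False using clash p by blast
  qed
  have "q < t"
  proof (rule ccontr)
    assume "\<not> q < t"
    then have "mem vA t" using convex[OF p(2) q(2)] four_after_p[OF t(2)] by simp
    then show False using clash t by blast
  qed
  have "x6A < q"
  proof (rule ccontr)
    assume "\<not> x6A < q"
    show False
    proof (cases "t \<le> x6A")
      case True
      then have "mem vA t" using convex[OF q(2) e6A(2)] \<open>q < t\<close> by simp
      then show False using clash t by blast
    next
      case False
      then have "mem v4 x6A" "mem vB x6A"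
        using convex[OF q(1) t(2)] convex[OF q(3) t(3)] \<open>\<not> x6A < q\<close> by simp_all
      then show False using clash e6A q by blast
    qed
  qed
  have "x56 < q"
  proof (rule ccontr)
    assume "\<not> x56 < q"
    then have "mem v6 q" using convex[OF e6A(1) e56(2)] \<open>x6A < q\<close> by simp
    then show False using clash q by blast
  qed
  have "x45 < q"
  proof (rule ccontr)
    assume "\<not> x45 < q"
    then have "mem v5 q" using convex[OF e56(1) e45(2)] \<open>x56 < q\<close> by simp
    then show False using clash q by blast
  qed
  moreover have "p < x45" using four_after_p[OF e45(1)] .
  ultimately have "mem vA x45" "mem vB x45"
    using convex[OF p(2) q(2)] convex[OF p(3) q(3)] by simp_all
  then show False using clash e45 by blast
qed

end

lemma gadget_forces_four_in_a_bin:
  fixes mem :: "'v \<Rightarrow> 'i::linorder \<Rightarrow> bool"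
  assumes convex: "\<And>v x y z. mem v x \<Longrightarrow> mem v z \<Longrightarrow> x \<le> y \<Longrightarrow> y \<le> z \<Longrightarrow> mem v y"
    and at_most_three: "\<And>a b c d x. distinct [a, b, c, d] \<Longrightarrow>
      mem a x \<Longrightarrow> mem b x \<Longrightarrow> mem c x \<Longrightarrow> mem d x \<Longrightarrow> False"
    and distinct: "distinct [v1, v2, v4, v5, v6, vA, vB]"
    and covered: "\<And>e. e \<in> {{v2, vA, vB}, {v4, vA, vB}, {v1, v4}, {v1, vB}, {v4, vB}, {v5, v6},
      {v4, v5}, {v6, vA}} \<Longrightarrow> \<exists>x. \<forall>v\<in>e. mem v x"
  shows False
proof -
  obtain p q where p: "mem v2 p" "mem vA p" "mem vB p" and q: "mem v4 q" "mem vA q" "mem vB q"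
    using covered[of "{v2, vA, vB}"] covered[of "{v4, vA, vB}"] by auto
  have "p \<noteq> q" using at_most_three[of v2 v4 vA vB p] distinct p q by auto
  then consider "p < q" | "q < p" by (auto simp: neq_iff)
  then show False
  proof cases
    case 1
    show False
      by (rule gadget_forces_four_in_a_bin_ordered[where mem = mem, OF _ _ distinct _ p q 1])
        (fact convex at_most_three covered)+
  next
    case 2
    show False
      by (rule linorder.gadget_forces_four_in_a_bin_ordered[OF dual_linorder, where mem = mem,
            OF _ _ distinct _ p q 2])
        (fact at_most_three covered | rule convex, assumption+)+
  qed
qed

lemma finite_idx: "finite (UNIV :: idx set)"
proof -
  have "(UNIV :: idx set) = {I1, I2, I3, I4, I5, I6, IA, IB}"
    using idx.exhaust by auto
  then show ?thesis
    by (metis finite.emptyI finite_insert)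
qed

lemma finite_Hn_V: "finite (Hn_V n)"
  by (simp add: Hn_V_def finite_idx)

lemma gadget_edges_subset_Hn_S: "k \<in> {1..n} \<Longrightarrow> gadget_edges k \<subseteq> Hn_S n"
  unfolding Hn_S_def by blast

lemma gadget_1_edges_subset_Hn_S:
  assumes "1 \<le> n"
  shows "{{(1, I2), (1, IA), (1, IB)}, {(1, I4), (1, IA), (1, IB)}, {(1, I1), (1, I4)}, {(1, I1), (1, IB)},
    {(1, I4), (1, IB)}, {(1, I5), (1, I6)}, {(1, I4), (1, I5)}, {(1, I6), (1, IA)}} \<subseteq> Hn_S n"
proof -
  have "gadget_edges 1 \<subseteq> Hn_S n"
    using assms by (intro gadget_edges_subset_Hn_S) simp
  moreover have "{(1, I6), (1, IA)} \<in> Hn_S n"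
    unfolding Hn_S_def by simp
  ultimately show ?thesis
    unfolding gadget_edges_def by (simp add: insert_subset)
qed

lemma pd_width_Hn_ge_3:
  assumes "1 \<le> n" and pd: "is_path_decomposition (Hn_V n) (Hn_S n) Xs"
  shows "3 \<le> pd_width Xs"
proof (rule ccontr)
  assume narrow: "\<not> 3 \<le> pd_width Xs"
  define mem where "mem v r \<longleftrightarrow> r < length Xs \<and> v \<in> Xs ! r" for v r
  have convex: "mem v y" if "mem v x" "mem v z" "x \<le> y" "y \<le> z" for v x y z
    using is_path_decompositionD(3)[OF pd, of x y z v] that unfolding mem_def by simp
  have at_most_three: False
    if "distinct [a, b, c, d]" "mem a x" "mem b x" "mem c x" "mem d x" for a b c d x
  proof -
    have "card {a, b, c, d} \<le> pd_width Xs + 1"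
      using that by (intro card_le_pd_width[OF pd finite_Hn_V]) (auto simp: mem_def)
    then show False using that(1) narrow by simp
  qed
  have covered: "\<exists>x. \<forall>v\<in>e. mem v x" if "e \<in> Hn_S n" for e
    using is_path_decompositionD(2)[OF pd that] unfolding mem_def by blast
  have distinct: "distinct [(1::nat, I1), (1, I2), (1, I4), (1, I5), (1, I6), (1, IA), (1, IB)]"
    by simp
  have covered_gadget: "\<exists>x. \<forall>v\<in>e. mem v x"
    if "e \<in> {{(1, I2), (1, IA), (1, IB)}, {(1, I4), (1, IA), (1, IB)}, {(1, I1), (1, I4)},
      {(1, I1), (1, IB)}, {(1, I4), (1, IB)}, {(1, I5), (1, I6)}, {(1, I4), (1, I5)}, {(1, I6), (1, IA)}}"
    for e
    using covered gadget_1_edges_subset_Hn_S[OF assms(1)] that by (meson subsetD)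
  show False
    by (rule gadget_forces_four_in_a_bin[where mem = mem])
      (fact convex at_most_three distinct covered_gadget)+
qed

(* The vertices (0, i) lie outside H_n; the empty interval [1, 0] keeps them out of every bin. *)
fun first_bin :: "nat \<times> idx \<Rightarrow> nat" where
  "first_bin (0, i) = 1"
| "first_bin (Suc q, I6) = 6 * q"
| "first_bin (Suc q, IA) = 6 * q"
| "first_bin (Suc q, I3) = 6 * q + 1"
| "first_bin (Suc q, I5) = 6 * q + 1"
| "first_bin (Suc q, I2) = 6 * q + 2"
| "first_bin (Suc q, I4) = 6 * q + 3"
| "first_bin (Suc q, IB) = 6 * q + 4"
| "first_bin (Suc q, I1) = 6 * q + 5"

fun last_bin :: "nat \<times> idx \<Rightarrow> nat" where
  "last_bin (0, i) = 0"
| "last_bin (Suc q, I6) = 6 * q + 1"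
| "last_bin (Suc q, IA) = 6 * q + 4"
| "last_bin (Suc q, I3) = 6 * q + 2"
| "last_bin (Suc q, I5) = 6 * q + 3"
| "last_bin (Suc q, I2) = 6 * q + 5"
| "last_bin (Suc q, I4) = 6 * q + 5"
| "last_bin (Suc q, IB) = 6 * q + 6"
| "last_bin (Suc q, I1) = 6 * q + 6"

definition bin :: "nat \<Rightarrow> (nat \<times> idx) set" where
  "bin r = {v. first_bin v \<le> r \<and> r \<le> last_bin v}"

lemma bin_convex: "v \<in> bin x \<Longrightarrow> v \<in> bin z \<Longrightarrow> x \<le> y \<Longrightarrow> y \<le> z \<Longrightarrow> v \<in> bin y"
  by (simp add: bin_def)

lemma bin_eq:
  shows "bin 0 = {(1, I6), (1, IA)}"
    and "bin (6 * q + 1) = {(q + 1, I3), (q + 1, I5), (q + 1, I6), (q + 1, IA)}"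
    and "bin (6 * q + 2) = {(q + 1, I2), (q + 1, I3), (q + 1, I5), (q + 1, IA)}"
    and "bin (6 * q + 3) = {(q + 1, I2), (q + 1, I4), (q + 1, I5), (q + 1, IA)}"
    and "bin (6 * q + 4) = {(q + 1, I2), (q + 1, I4), (q + 1, IA), (q + 1, IB)}"
    and "bin (6 * q + 5) = {(q + 1, I1), (q + 1, I2), (q + 1, I4), (q + 1, IB)}"
    and "bin (6 * q + 6) = {(q + 1, I1), (q + 1, IB), (q + 2, I6), (q + 2, IA)}"
  unfolding bin_def set_eq_iff split_paired_All
  by (intro allI, case_tac a; case_tac b; auto; presburger)+

lemma card_bin_le: "card (bin r) \<le> 4"
proof (cases r)
  case 0
  then show ?thesis by (simp add: bin_eq)
next
  case (Suc s)
  define q where "q = s div 6"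
  have "s mod 6 \<in> {0, 1, 2, 3, 4, 5}" by auto
  moreover have "r = 6 * q + s mod 6 + 1" by (simp add: q_def Suc)
  ultimately consider "r = 6 * q + 1" | "r = 6 * q + 2" | "r = 6 * q + 3" | "r = 6 * q + 4"
    | "r = 6 * q + 5" | "r = 6 * q + 6"
    by auto
  then show ?thesis by cases (simp_all add: bin_eq bin_eq[simplified])
qed

lemma first_bin_Suc_bounds: "6 * q \<le> first_bin (Suc q, i)" "first_bin (Suc q, i) \<le> 6 * q + 5"
  by (cases i; simp)+

lemma first_bin_le_last_bin: "first_bin (Suc q, i) \<le> last_bin (Suc q, i)"
  by (cases i) simp_all

lemma bin_subset_Hn_V:
  assumes "r < 6 * n"
  shows "bin r \<subseteq> Hn_V n"
proof
  fix v assume "v \<in> bin r"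
  moreover obtain k i where v: "v = (k, i)" by fastforce
  ultimately obtain q where "k = Suc q" "first_bin (Suc q, i) \<le> r"
    by (cases k) (auto simp: bin_def)
  then have "k = Suc q" "6 * q \<le> r"
    using first_bin_Suc_bounds(1)[of q i] by simp_all
  then show "v \<in> Hn_V n"
    using assms v by (simp add: Hn_V_def)
qed

lemma Hn_S_covered_by_bin:
  assumes "1 \<le> n" and "e \<in> Hn_S n"
  shows "\<exists>r < 6 * n. e \<subseteq> bin r"
  using assms(2) unfolding Hn_S_def
proof (elim UnE)
  assume "e \<in> {{v} |v. v \<in> Hn_V n}"
  then obtain k i where "e = {(k, i)}" "1 \<le> k" "k \<le> n"
    by (auto simp: Hn_V_def)
  then obtain q where "e = {(Suc q, i)}" "q < n"
    by (cases k) auto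
  moreover have "first_bin (Suc q, i) < 6 * n"
    using first_bin_Suc_bounds(2)[of q i] \<open>q < n\<close> by linarith
  ultimately show ?thesis
    using first_bin_le_last_bin[of q i] by (auto simp: bin_def)
next
  assume "e \<in> (\<Union>k\<in>{1..n}. gadget_edges k)"
  then obtain k where "e \<in> gadget_edges k" "1 \<le> k" "k \<le> n"
    by auto
  then obtain q where q: "e \<in> gadget_edges (q + 1)" "q < n"
    by (cases k) auto
  have "\<exists>j \<in> {1, 2, 3, 4, 5}. e \<subseteq> bin (6 * q + j)"
    using q(1) unfolding gadget_edges_def by (auto simp: bin_eq bin_eq[simplified])
  then obtain j where j: "j \<in> {1, 2, 3, 4, 5}" and "e \<subseteq> bin (6 * q + j)"
    by blast
  moreover have "6 * q + j < 6 * n"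
    using q(2) j by auto
  ultimately show ?thesis
    by blast
next
  assume "e \<in> {{(k, I6), (k - 1, I1)} |k. 2 \<le> k \<and> k \<le> n}"
  then obtain q where "e = {(q + 2, I6), (q + 1, I1)}" "q + 2 \<le> n"
    by (auto dest!: le_Suc_ex)
  then show ?thesis
    by (intro exI[of _ "6 * q + 6"]) (auto simp: bin_eq)
next
  assume "e \<in> {{(k, IB), (k + 1, IA)} |k. 1 \<le> k \<and> k \<le> n - 1}"
  then obtain q where "e = {(q + 1, IB), (q + 2, IA)}" "q + 2 \<le> n"
    by (auto dest!: le_Suc_ex)
  then show ?thesis
    by (intro exI[of _ "6 * q + 6"]) (auto simp: bin_eq)
next
  assume "e \<in> {{(1, I6), (1, IA)}}"
  then show ?thesis
    using assms(1) by (intro exI[of _ 0]) (auto simp: bin_eq)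
qed

lemma pd_width_map_bin_le: "0 < m \<Longrightarrow> pd_width (map bin [0..<m]) \<le> 3"
  by (intro pd_width_le) (auto simp: card_bin_le)

lemma is_path_decomposition_Hn:
  assumes "1 \<le> n"
  shows "is_path_decomposition (Hn_V n) (Hn_S n) (map bin [0..<6 * n])"
proof (rule is_path_decomposition_map)
  show "0 < 6 * n"
    using assms by simp
  show "bin r \<subseteq> Hn_V n" if "r < 6 * n" for r
    using bin_subset_Hn_V[OF that] .
  show "\<exists>r < 6 * n. e \<subseteq> bin r" if "e \<in> Hn_S n" for e
    using Hn_S_covered_by_bin[OF assms that] .
  moreover have "{v} \<in> Hn_S n" if "v \<in> Hn_V n" for v
    using that unfolding Hn_S_def by blast
  ultimately show "\<exists>r < 6 * n. v \<in> bin r" if "v \<in> Hn_V n" for v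
    using that by blast
qed (fact bin_convex)

theorem proposition3p1:
  fixes n :: nat
  assumes "n \<ge> 1"
  shows "pathwidth (Hn_V n) (Hn_S n) = 3"
proof -
  let ?Xs = "map bin [0..<6 * n]"
  have pd: "is_path_decomposition (Hn_V n) (Hn_S n) ?Xs"
    using is_path_decomposition_Hn[OF assms] .
  moreover have "pd_width ?Xs = 3"
    using pd_width_map_bin_le[of "6 * n"] pd_width_Hn_ge_3[OF assms pd] assms by simp
  ultimately show ?thesis
    using pd_width_Hn_ge_3[OF assms] by (rule pathwidth_eqI)
qed

end
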